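(* Let $(\Omega,\mathcal{F},\mathbb{P})$ be a probability space and $\mathcal{X}\subseteq\mathbb{L}^0$. Then either $\mathcal{X}$ fails to be uniformly $\mathbb{Q}$-integrable for every probability $\mathbb{Q}\ll\mathbb{P}$, or there exists a probability $\mathbb{Q}_{\mathcal{X}}\ll\mathbb{P}$ such that (i) $\mathcal{X}$ is uniformly $\mathbb{Q}_{\mathcal{X}}$-integrable, and (ii) whenever a probability $\mathbb{Q}\ll\mathbb{P}$ is singular to $\mathbb{Q}_{\mathcal{X}}$, $\mathcal{X}$ fails to be uniformly $\mathbb{Q}$-integrable.
   Context: $\mathbb{L}^0$ is the space of (equivalence classes modulo $\mathbb{P}$-null sets of) real-valued random variables. For a probability $\mathbb{Q}\ll\mathbb{P}$, $\mathcal{X}\subseteq\mathbb{L}^0$ is uniformly $\mathbb{Q}$-integrable if $\lim_{n\to\infty}\sup_{X\in\mathcal{X}}\mathbb{E}_{\mathbb{Q}}[|X|\mathbb{I}_{\{|X|>n\}}]=0$. *)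

theory Defs
  imports "HOL-Probability.Probability"
begin

definition prob_abs_cont :: "'a measure \<Rightarrow> 'a measure \<Rightarrow> bool" where
  "prob_abs_cont P Q \<longleftrightarrow> prob_space Q \<and> sets Q = sets P \<and> absolutely_continuous P Q"

definition mutually_singular :: "'a measure \<Rightarrow> 'a measure \<Rightarrow> bool" where
  "mutually_singular Q R \<longleftrightarrow>
     (\<exists>A \<in> sets Q. emeasure Q A = 0 \<and> emeasure R (space R - A) = 0)"

definition unif_integrable :: "'a measure \<Rightarrow> ('a \<Rightarrow> real) set \<Rightarrow> bool" where
  "unif_integrable Q XX \<longleftrightarrow>
     ((\<lambda>n::nat. SUP X\<in>XX. \<integral>\<^sup>+ \<omega>. ennreal \<bar>X \<omega>\<bar> * indicator {\<omega>. \<bar>X \<omega>\<bar> > real n} \<omega> \<partial>Q)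
        \<longlonglongrightarrow> 0)"

end

theory Submission
  imports Defs
begin

text \<open>
  Call a density \<open>f\<close> admissible if \<open>f dP\<close> is a probability under which \<open>XX\<close> is uniformly
  integrable. If there is none, the first alternative holds. Otherwise admissible densities
  are closed under countable mixtures \<open>\<Sum>n. c n * f n\<close>: uniform integrability bounds
  \<open>sup X. E[|X|]\<close> under each \<open>f n dP\<close>, so the positive weights \<open>c n\<close> can be chosen small enough
  that the tail expectations of the mixture tend to zero by dominated convergence for series.
  An exhaustion argument then yields an admissible \<open>h\<close> whose support \<open>{h > 0}\<close> has maximal
  \<open>P\<close>-measure, so that it contains the support of every admissible density up to a null set.
  Every \<open>Q \<ll> P\<close> under which \<open>XX\<close> is uniformly integrable has an admissible density, hence
  charges \<open>{h > 0}\<close> and is not singular to \<open>h dP\<close>.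
\<close>

definition tail_part :: "('a \<Rightarrow> real) \<Rightarrow> nat \<Rightarrow> 'a \<Rightarrow> ennreal" where
  "tail_part X n \<omega> = ennreal \<bar>X \<omega>\<bar> * indicator {\<omega>. \<bar>X \<omega>\<bar> > real n} \<omega>"

lemma borel_measurable_tail_part[measurable]:
  assumes [measurable]: "X \<in> borel_measurable M"
  shows "tail_part X n \<in> borel_measurable M"
  unfolding tail_part_def indicator_def of_bool_def by measurable

lemma tail_part_antimono: "m \<le> n \<Longrightarrow> tail_part X n \<omega> \<le> tail_part X m \<omega>"
  unfolding tail_part_def indicator_def by auto

lemma tail_part_0_le: "tail_part X 0 \<omega> \<le> tail_part X n \<omega> + of_nat n"
proof (cases "\<bar>X \<omega>\<bar> > real n")
  case False
  then have "ennreal \<bar>X \<omega>\<bar> \<le> of_nat n"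
    by (simp add: ennreal_of_nat_eq_real_of_nat)
  then show ?thesis
    unfolding tail_part_def indicator_def by (auto intro: order_trans)
qed (auto simp: tail_part_def indicator_def)

lemma unif_integrable_iff_tail_part:
  "unif_integrable Q XX \<longleftrightarrow> ((\<lambda>n. SUP X\<in>XX. \<integral>\<^sup>+ \<omega>. tail_part X n \<omega> \<partial>Q) \<longlonglongrightarrow> 0)"
  unfolding unif_integrable_def tail_part_def ..

lemma unif_integrable_SUP_nn_integral_less_top:
  assumes Q: "prob_space Q" and meas: "\<forall>X\<in>XX. X \<in> borel_measurable Q"
    and ui: "unif_integrable Q XX"
  shows "(SUP X\<in>XX. \<integral>\<^sup>+ \<omega>. tail_part X 0 \<omega> \<partial>Q) < \<infinity>"
proof -
  interpret prob_space Q by fact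
  have "\<forall>\<^sub>F n in sequentially. (SUP X\<in>XX. \<integral>\<^sup>+ \<omega>. tail_part X n \<omega> \<partial>Q) < 1"
    using ui unfolding unif_integrable_iff_tail_part by (rule order_tendstoD) simp
  then obtain n where n: "(SUP X\<in>XX. \<integral>\<^sup>+ \<omega>. tail_part X n \<omega> \<partial>Q) < 1"
    by (meson eventually_sequentially order_refl)
  have "(SUP X\<in>XX. \<integral>\<^sup>+ \<omega>. tail_part X 0 \<omega> \<partial>Q)
      \<le> (SUP X\<in>XX. \<integral>\<^sup>+ \<omega>. tail_part X n \<omega> \<partial>Q) + of_nat n"
  proof (rule SUP_least)
    fix X assume X: "X \<in> XX"
    have "(\<integral>\<^sup>+ \<omega>. tail_part X 0 \<omega> \<partial>Q) \<le> (\<integral>\<^sup>+ \<omega>. tail_part X n \<omega> + of_nat n \<partial>Q)"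
      by (intro nn_integral_mono tail_part_0_le)
    also have "\<dots> = (\<integral>\<^sup>+ \<omega>. tail_part X n \<omega> \<partial>Q) + of_nat n"
      using X meas by (subst nn_integral_add) (auto simp: emeasure_space_1)
    also have "\<dots> \<le> (SUP X\<in>XX. \<integral>\<^sup>+ \<omega>. tail_part X n \<omega> \<partial>Q) + of_nat n"
      using X by (intro add_right_mono SUP_upper)
    finally show "(\<integral>\<^sup>+ \<omega>. tail_part X 0 \<omega> \<partial>Q) \<le> \<dots>" .
  qed
  also have "\<dots> < \<infinity>"
  proof -
    have "(SUP X\<in>XX. \<integral>\<^sup>+ \<omega>. tail_part X n \<omega> \<partial>Q) < top"
      using n by (rule less_trans) simp
    then show ?thesis
      by (simp only: infinity_ennreal_def ennreal_add_less_top of_nat_less_top simp_thms)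
  qed
  finally show ?thesis .
qed

lemma exists_weights_sums_1:
  fixes \<beta> :: "nat \<Rightarrow> real"
  assumes \<beta>: "\<And>n. 0 \<le> \<beta> n"
  obtains c where "\<And>n. 0 < c n" "c sums 1" "summable (\<lambda>n. c n * \<beta> n)"
proof -
  define w where "w n = (1/2::real)^Suc n / (1 + \<beta> n)" for n
  have w_pos: "0 < w n" for n
    using \<beta>[of n] by (simp add: w_def)
  have w_le: "w n \<le> (1/2)^Suc n" and w_\<beta>_le: "w n * \<beta> n \<le> (1/2)^Suc n" for n
    using \<beta>[of n] by (simp_all add: w_def divide_le_eq)
  have geom: "summable (\<lambda>n. (1/2::real)^Suc n)"
    using summable_geometric[of "1/2::real"] by simp
  have "summable w"
    by (rule summable_comparison_test'[OF geom]) (use w_pos w_le in \<open>auto simp: less_imp_le\<close>)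
  define s where "s = suminf w"
  have s_pos: "0 < s"
    unfolding s_def using \<open>summable w\<close> w_pos by (intro suminf_pos) auto
  show ?thesis
  proof
    show "0 < w n / s" for n
      using w_pos s_pos by simp
    show "(\<lambda>n. w n / s) sums 1"
      using sums_divide[OF summable_sums[OF \<open>summable w\<close>], of s] s_pos by (simp add: s_def)
    have le: "w n / s * \<beta> n \<le> (1/2)^Suc n / s" for n
      using divide_right_mono[OF w_\<beta>_le[of n], of s] s_pos by simp
    show "summable (\<lambda>n. w n / s * \<beta> n)"
      by (rule summable_comparison_test'[OF summable_divide[OF geom, of s], of 0])
        (use le w_pos s_pos \<beta> in \<open>auto simp: less_imp_le\<close>)
  qed
qed

lemma suminf_tendsto_0_decseq:
  fixes a :: "nat \<Rightarrow> nat \<Rightarrow> ennreal"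
  assumes dec: "\<And>n. decseq (a n)" and lim: "\<And>n. a n \<longlonglongrightarrow> 0"
    and fin: "(\<Sum>n. a n 0) < \<infinity>"
  shows "(\<lambda>m. \<Sum>n. a n m) \<longlonglongrightarrow> 0"
proof -
  have dec_sum: "decseq (\<lambda>m. \<Sum>n. a n m)"
    using dec by (intro decseq_SucI suminf_le) (auto simp: decseq_Suc_iff)
  have INF_a: "(INF m. a n m) = 0" for n
    using LIMSEQ_INF[OF dec] lim LIMSEQ_unique by blast
  have "(\<integral>\<^sup>+n. (INF m. a n m) \<partial>count_space UNIV) = (INF m. \<integral>\<^sup>+n. a n m \<partial>count_space UNIV)"
  proof (rule nn_integral_monotone_convergence_INF_decseq)
    show "decseq (\<lambda>m n. a n m)"
      by (intro decseq_SucI le_funI) (use dec in \<open>auto simp: decseq_Suc_iff\<close>)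
    show "(\<integral>\<^sup>+n. a n m \<partial>count_space UNIV) < \<infinity>" for m
      using dec_sum fin by (auto simp: nn_integral_count_space_nat decseq_def intro: le_less_trans)
  qed simp
  then have "(INF m. \<Sum>n. a n m) = 0"
    by (simp add: nn_integral_count_space_nat INF_a)
  then show ?thesis
    using LIMSEQ_INF[OF dec_sum] by simp
qed

lemma nn_integral_suminf_cmult_mult:
  fixes c :: "nat \<Rightarrow> ennreal"
  assumes [measurable]: "\<And>n. f n \<in> borel_measurable M" "g \<in> borel_measurable M"
  shows "(\<integral>\<^sup>+x. (\<Sum>n. c n * f n x) * g x \<partial>M) = (\<Sum>n. c n * \<integral>\<^sup>+x. f n x * g x \<partial>M)"
proof -
  have "(\<integral>\<^sup>+x. (\<Sum>n. c n * f n x) * g x \<partial>M) = (\<integral>\<^sup>+x. (\<Sum>n. c n * (f n x * g x)) \<partial>M)"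
    by (simp add: mult.assoc ennreal_suminf_multc[symmetric])
  also have "\<dots> = (\<Sum>n. \<integral>\<^sup>+x. c n * (f n x * g x) \<partial>M)"
    by (rule nn_integral_suminf) measurable
  finally show ?thesis
    by (simp add: nn_integral_cmult)
qed

definition admissible_density :: "'a measure \<Rightarrow> ('a \<Rightarrow> real) set \<Rightarrow> ('a \<Rightarrow> ennreal) \<Rightarrow> bool" where
  "admissible_density P XX f \<longleftrightarrow>
     f \<in> borel_measurable P \<and> prob_space (density P f) \<and> unif_integrable (density P f) XX"

lemma admissible_density_suminf:
  fixes f :: "nat \<Rightarrow> 'a \<Rightarrow> ennreal"
  assumes meas: "\<forall>X\<in>XX. X \<in> borel_measurable P"
    and f: "\<And>n. admissible_density P XX (f n)"
  obtains h where "admissible_density P XX h" "\<And>n x. 0 < f n x \<Longrightarrow> 0 < h x"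
proof -
  have f_meas[measurable]: "\<And>n. f n \<in> borel_measurable P"
    and f_prob: "\<And>n. prob_space (density P (f n))"
    and f_ui: "\<And>n. unif_integrable (density P (f n)) XX"
    using f by (auto simp: admissible_density_def)
  define b where "b n m = (SUP X\<in>XX. \<integral>\<^sup>+\<omega>. tail_part X m \<omega> \<partial>density P (f n))" for n m
  define \<beta> where "\<beta> n = enn2real (b n 0)" for n
  have "b n 0 < \<infinity>" for n
    unfolding b_def
    by (rule unif_integrable_SUP_nn_integral_less_top[OF f_prob _ f_ui])
      (use meas in \<open>simp cong: measurable_cong_sets\<close>)
  then have \<beta>: "\<And>n. b n 0 = ennreal (\<beta> n)" "\<And>n. 0 \<le> \<beta> n"
    by (simp_all add: \<beta>_def less_top)
  obtain c where c_pos: "\<And>n. 0 < c n" and c_sums: "c sums 1"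
    and c_\<beta>: "summable (\<lambda>n. c n * \<beta> n)"
    using exists_weights_sums_1[of \<beta>] \<beta>(2) by blast
  define h where "h x = (\<Sum>n. ennreal (c n) * f n x)" for x
  have h_meas[measurable]: "h \<in> borel_measurable P"
    unfolding h_def by measurable
  have h_integral: "(\<integral>\<^sup>+x. h x * g x \<partial>P) = (\<Sum>n. ennreal (c n) * \<integral>\<^sup>+x. g x \<partial>density P (f n))"
    if [measurable]: "g \<in> borel_measurable P" for g
    unfolding h_def by (simp add: nn_integral_suminf_cmult_mult nn_integral_density)
  have h_prob: "prob_space (density P h)"
  proof
    have "emeasure (density P h) (space (density P h)) = (\<integral>\<^sup>+x. h x * 1 \<partial>P)"
      by (auto simp: emeasure_density intro!: nn_integral_cong)
    also have "\<dots> = (\<Sum>n. ennreal (c n))"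
      using h_integral[of "\<lambda>_. 1"] prob_space.emeasure_space_1[OF f_prob] by simp
    also have "\<dots> = 1"
      using c_sums c_pos by (simp add: less_imp_le sums_iff suminf_ennreal2)
    finally show "emeasure (density P h) (space (density P h)) = 1" .
  qed
  have h_ui: "unif_integrable (density P h) XX"
  proof -
    define T where "T m = (\<Sum>n. ennreal (c n) * b n m)" for m
    have tail_le: "(\<integral>\<^sup>+\<omega>. tail_part X m \<omega> \<partial>density P h) \<le> T m" if X: "X \<in> XX" for X m
    proof -
      have [measurable]: "X \<in> borel_measurable P"
        using X meas by auto
      have "(\<integral>\<^sup>+\<omega>. tail_part X m \<omega> \<partial>density P h)
          = (\<Sum>n. ennreal (c n) * \<integral>\<^sup>+\<omega>. tail_part X m \<omega> \<partial>density P (f n))"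
        by (simp add: nn_integral_density h_integral)
      also have "\<dots> \<le> T m"
        unfolding T_def b_def by (intro suminf_le mult_left_mono SUP_upper X) auto
      finally show ?thesis .
    qed
    have T_lim: "T \<longlonglongrightarrow> 0"
      unfolding T_def
    proof (rule suminf_tendsto_0_decseq)
      have "decseq (b n)" for n
        unfolding b_def by (intro decseq_SucI SUP_mono' nn_integral_mono tail_part_antimono) auto
      then show "decseq (\<lambda>m. ennreal (c n) * b n m)" for n
        by (intro decseq_SucI mult_left_mono) (auto simp: decseq_Suc_iff)
      show "(\<lambda>m. ennreal (c n) * b n m) \<longlonglongrightarrow> 0" for n
      proof -
        have "b n \<longlonglongrightarrow> 0"
          using f_ui[of n] unfolding unif_integrable_iff_tail_part b_def .
        then show ?thesis
          using ennreal_tendsto_cmult[of "ennreal (c n)" "b n" 0] by simp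
      qed
      have "(\<Sum>n. ennreal (c n) * b n 0) = ennreal (\<Sum>n. c n * \<beta> n)"
        using c_\<beta> c_pos \<beta>
        by (simp add: ennreal_mult'[symmetric] suminf_ennreal2 less_imp_le)
      then show "(\<Sum>n. ennreal (c n) * b n 0) < \<infinity>"
        by simp
    qed
    show ?thesis
      unfolding unif_integrable_iff_tail_part
      by (rule tendsto_sandwich[OF _ _ tendsto_const T_lim])
        (auto intro!: always_eventually SUP_least tail_le)
  qed
  have h_supp: "0 < h x" if "0 < f n x" for n x
  proof -
    have "0 < ennreal (c n) * f n x"
      using that c_pos[of n] by (simp add: ennreal_zero_less_mult_iff)
    also have "\<dots> \<le> h x"
      unfolding h_def by (metis ennreal_suminf_lessD not_le order_less_irrefl)
    finally show ?thesis .
  qed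
  show ?thesis
    by (rule that) (use h_meas h_prob h_ui h_supp in \<open>auto simp: admissible_density_def\<close>)
qed

lemma exists_maximal_support:
  fixes D :: "('a \<Rightarrow> ennreal) set"
  assumes M: "finite_measure M" and "D \<noteq> {}" and D_meas: "D \<subseteq> borel_measurable M"
    and D_closed: "\<And>f. (\<And>n::nat. f n \<in> D) \<Longrightarrow> \<exists>h\<in>D. \<forall>n x. 0 < f n x \<longrightarrow> 0 < h x"
  obtains h where "h \<in> D" "\<And>g. g \<in> D \<Longrightarrow> emeasure M {x\<in>space M. 0 < g x \<and> h x = 0} = 0"
proof -
  interpret finite_measure M by fact
  define v where "v f = emeasure M {x\<in>space M. 0 < f x}" for f :: "'a \<Rightarrow> ennreal"
  have v_mono: "v f \<le> v g" if "\<And>x. 0 < f x \<Longrightarrow> 0 < g x" "g \<in> borel_measurable M" for f g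
    unfolding v_def using that by (intro emeasure_mono) auto
  obtain vs :: "nat \<Rightarrow> ennreal" where vs: "range vs \<subseteq> v ` D" and SUP_v: "(SUP f\<in>D. v f) = (SUP n. vs n)"
    using ennreal_SUP_countable_SUP[OF \<open>D \<noteq> {}\<close>, of v] by blast
  have "\<forall>n. \<exists>f. f \<in> D \<and> v f = vs n"
    using vs by (metis image_iff rangeI subsetD)
  then obtain fs where fs: "\<And>n. fs n \<in> D" "\<And>n. v (fs n) = vs n"
    by metis
  obtain h where h: "h \<in> D" and h_supp: "\<And>n x. 0 < fs n x \<Longrightarrow> 0 < h x"
    using D_closed[of fs] fs(1) by blast
  have h_meas[measurable]: "h \<in> borel_measurable M"
    using h D_meas by auto
  have v_h: "v h = (SUP f\<in>D. v f)"
  proof (rule antisym)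
    show "v h \<le> (SUP f\<in>D. v f)"
      using h by (rule SUP_upper)
    show "(SUP f\<in>D. v f) \<le> v h"
      unfolding SUP_v using fs(2) h_supp by (intro SUP_least) (metis v_mono h_meas)
  qed
  have "emeasure M {x\<in>space M. 0 < g x \<and> h x = 0} = 0" if g: "g \<in> D" for g
  proof -
    have g_meas[measurable]: "g \<in> borel_measurable M"
      using g D_meas by auto
    have "\<exists>k\<in>D. \<forall>n x. 0 < (if n = (0::nat) then g else h) x \<longrightarrow> 0 < k x"
      by (rule D_closed) (simp add: g h)
    then obtain k where k: "k \<in> D" and k_supp: "\<And>n x. 0 < (if n = (0::nat) then g else h) x \<Longrightarrow> 0 < k x"
      by blast
    have k_meas[measurable]: "k \<in> borel_measurable M"
      using k D_meas by auto
    have "v h + emeasure M {x\<in>space M. 0 < g x \<and> h x = 0}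
        = emeasure M ({x\<in>space M. 0 < h x} \<union> {x\<in>space M. 0 < g x \<and> h x = 0})"
      unfolding v_def by (rule plus_emeasure) auto
    also have "\<dots> \<le> v k"
      unfolding v_def by (rule emeasure_mono) (use k_supp[of 0] k_supp[of 1] in auto)
    also have "\<dots> \<le> v h"
      unfolding v_h using k by (rule SUP_upper)
    finally show ?thesis
      by (simp add: v_def emeasure_finite)
  qed
  with h that show ?thesis
    by blast
qed

lemma exists_maximal_admissible_density:
  assumes "prob_space P" and meas: "\<forall>X\<in>XX. X \<in> borel_measurable P"
    and "\<exists>f. admissible_density P XX f"
  obtains h where "admissible_density P XX h"
    "\<And>g. admissible_density P XX g \<Longrightarrow> emeasure P {x\<in>space P. 0 < g x \<and> h x = 0} = 0"
proof (rule exists_maximal_support[of P "Collect (admissible_density P XX)"])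
  show "finite_measure P"
    using \<open>prob_space P\<close> by (rule prob_space.finite_measure)
  show "\<exists>h\<in>Collect (admissible_density P XX). \<forall>n x. 0 < f n x \<longrightarrow> 0 < h x"
    if f: "\<And>n::nat. f n \<in> Collect (admissible_density P XX)" for f
  proof -
    obtain h where "admissible_density P XX h" "\<And>n x. 0 < f n x \<Longrightarrow> 0 < h x"
      by (rule admissible_density_suminf[OF meas, of f]) (use f in auto)
    then show ?thesis
      by blast
  qed
qed (use assms in \<open>auto simp: admissible_density_def\<close>)

lemma emeasure_density_eq_0_iff:
  assumes [measurable]: "f \<in> borel_measurable M" "A \<in> sets M"
  shows "emeasure (density M f) A = 0 \<longleftrightarrow> emeasure M {x\<in>A. 0 < f x} = 0"
proof -
  have "emeasure (density M f) A = 0 \<longleftrightarrow> (AE x in M. x \<in> A \<longrightarrow> f x = 0)"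
    using null_sets_density_iff[of f M A] by (simp add: null_sets_def)
  also have "\<dots> \<longleftrightarrow> emeasure M {x\<in>space M. \<not> (x \<in> A \<longrightarrow> f x = 0)} = 0"
    by (rule AE_iff_measurable) auto
  also have "{x\<in>space M. \<not> (x \<in> A \<longrightarrow> f x = 0)} = {x\<in>A. 0 < f x}"
    using sets.sets_into_space[of A M] by (auto simp: zero_less_iff_neq_zero)
  finally show ?thesis .
qed

lemma not_mutually_singular_density:
  assumes f_meas[measurable]: "f \<in> borel_measurable M" and g_meas[measurable]: "g \<in> borel_measurable M"
    and f_prob: "prob_space (density M f)"
    and supp: "emeasure M {x\<in>space M. 0 < f x \<and> g x = 0} = 0"
  shows "\<not> mutually_singular (density M f) (density M g)"
proof
  assume "mutually_singular (density M f) (density M g)"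
  then obtain A where A[measurable]: "A \<in> sets M"
    and f_A: "emeasure (density M f) A = 0" and g_A: "emeasure (density M g) (space M - A) = 0"
    unfolding mutually_singular_def by auto
  have "emeasure (density M f) (space M - A) = 1"
    using emeasure_compl[of A "density M f"] f_A prob_space.emeasure_space_1[OF f_prob] by simp
  then have f_pos: "emeasure M {x\<in>space M - A. 0 < f x} \<noteq> 0"
    by (subst emeasure_density_eq_0_iff[symmetric]) auto
  have g_null: "emeasure M {x\<in>space M - A. 0 < g x} = 0"
    using g_A by (subst emeasure_density_eq_0_iff[symmetric]) auto
  have "emeasure M {x\<in>space M - A. 0 < f x}
      \<le> emeasure M ({x\<in>space M. 0 < f x \<and> g x = 0} \<union> {x\<in>space M - A. 0 < g x})"
    by (rule emeasure_mono) (auto simp: zero_less_iff_neq_zero)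
  also have "\<dots> \<le> emeasure M {x\<in>space M. 0 < f x \<and> g x = 0} + emeasure M {x\<in>space M - A. 0 < g x}"
    by (rule emeasure_subadditive) auto
  also have "\<dots> = 0"
    using supp g_null by simp
  finally show False
    using f_pos by simp
qed

lemma admissible_density_RN_deriv:
  assumes "prob_space P" "prob_abs_cont P Q" "unif_integrable Q XX"
  shows "admissible_density P XX (RN_deriv P Q)" "density P (RN_deriv P Q) = Q"
proof -
  interpret prob_space P by fact
  show "density P (RN_deriv P Q) = Q"
    using assms(2) unfolding prob_abs_cont_def by (intro density_RN_deriv) auto
  then show "admissible_density P XX (RN_deriv P Q)"
    using assms(2,3) unfolding admissible_density_def prob_abs_cont_def by auto
qed

theorem proposition2p4:
  fixes P :: "'a measure" and XX :: "('a \<Rightarrow> real) set"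
  assumes "prob_space P"
    and "\<forall>X\<in>XX. X \<in> borel_measurable P"
  shows "(\<forall>Q. prob_abs_cont P Q \<longrightarrow> \<not> unif_integrable Q XX)
    \<or> (\<exists>QX. prob_abs_cont P QX \<and> unif_integrable QX XX \<and>
         (\<forall>Q. prob_abs_cont P Q \<and> mutually_singular Q QX \<longrightarrow> \<not> unif_integrable Q XX))"
proof (cases "\<exists>f. admissible_density P XX f")
  case False
  then show ?thesis
    using admissible_density_RN_deriv(1)[OF assms(1)] by blast
next
  case True
  obtain h where h: "admissible_density P XX h"
    and h_max: "\<And>g. admissible_density P XX g \<Longrightarrow> emeasure P {x\<in>space P. 0 < g x \<and> h x = 0} = 0"
    using exists_maximal_admissible_density[OF assms True] by metis
  have "\<not> unif_integrable Q XX" if Q: "prob_abs_cont P Q" and "mutually_singular Q (density P h)" for Q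
  proof
    assume "unif_integrable Q XX"
    note RN = admissible_density_RN_deriv[OF assms(1) Q this]
    have "\<not> mutually_singular (density P (RN_deriv P Q)) (density P h)"
      using RN(1) h h_max[OF RN(1)] by (intro not_mutually_singular_density) (auto simp: admissible_density_def)
    with \<open>mutually_singular Q (density P h)\<close> show False
      by (simp add: RN(2))
  qed
  moreover have "prob_abs_cont P (density P h)" "unif_integrable (density P h) XX"
    using h unfolding admissible_density_def prob_abs_cont_def
    by (auto intro: absolutely_continuousI_density)
  ultimately show ?thesis
    by blast
qed

end
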